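(* Let $\mathcal{M}_\Sigma$ be a trace monoid, let $S,T\subseteq\Sigma$ and $p\in(0,p_S)$. Consider the following recursive randomized procedure $\mathrm{A}_1(p,S,T)$: if $S\cap T=\emptyset$, return $\mathbf{e}$; otherwise choose $a_1\in S\cap T$, set $r=1-\mu_S(p)/\mu_{S\setminus\{a_1\}}(p)$, draw an integer $K$ with $\mathbb{P}(K=k)=(1-r)r^k$ ($k\geqslant0$), set $\xi=\mathbf{e}$, then for $i=0,\dots,K-1$ compute $v_i=\mathrm{A}_1(p,S\setminus\{a_1\},\mathscr{L}(a_1))$ (independently) and set $\xi\gets\xi\cdot v_i\cdot a_1$; finally compute $v_K=\mathrm{A}_1(p,S\setminus\{a_1\},T)$, set $\xi\gets\xi\cdot v_K$ and return $\xi$. Then the output $\xi\in\mathcal{M}_S$ has law $D^{p}_{S,T}$, i.e. $B_{S,p}(\,\cdot\mid\max(\xi)\subseteq T)$. Moreover, assume all real numbers $\mu_X(p)$ ($X\subseteq\Sigma$) are precomputed; that choosing an element of the intersection of two subsets of $\Sigma$, a function call, a variable assignment and a multiplication in $\mathcal{M}_\Sigma$ each take a constant number of steps; and that drawing a random integer with value $X$ takes at most a constant times $X+1$ steps. Then there is a constant $C$ (depending only on these cost constants) such that every execution of $\mathrm{A}_1(p,S,T)$ outputting $\xi$ takes at most $C(|\Sigma|+1)(|\xi|+1)$ steps, i.e. $\mathcal{O}(|\Sigma|(|\xi|+1))$ steps.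
   Context: Let $\Sigma$ be a finite alphabet and $\mathcal{R}$ a reflexive and symmetric binary relation on $\Sigma$. The trace monoid $\mathcal{M}_\Sigma$ is the quotient of $\Sigma^*$ by the congruence generated by $ab=ba$ for all $(a,b)\notin\mathcal{R}$; unit $\mathbf{e}$. For $\Sigma'\subseteq\Sigma$, $\mathcal{M}_{\Sigma'}$ is the submonoid generated by $\Sigma'$. $|x|$ is the length of $x$; $\max(x)$ is the set of letters $a$ with $x=y\cdot a$ for some trace $y$. $\mathscr{L}(a)=\{b\in\Sigma:(a,b)\in\mathcal{R}\}$. For $S\subseteq\Sigma$, a clique of $S$ is a subset of $S$ of pairwise non-$\mathcal{R}$-related letters (empty set included); $\mu_S(X)=\sum_{\gamma\text{ clique of }S}(-1)^{|\gamma|}X^{|\gamma|}$, $\mu_\emptyset=1$. For $S\neq\emptyset$, $p_S$ is the unique root of smallest modulus of $\mu_S$ (real, $0<p_S\leqslant1$); $p_\emptyset=+\infty$; $p_S\leqslant p_{S'}$ when $S'\subseteq S$. For $p\in(0,p_S)$, $\sum_{x\in\mathcal{M}_S}p^{|x|}=1/\mu_S(p)<\infty$ and $B_{S,p}$ is the probability distribution on $\mathcal{M}_S$ with $B_{S,p}(\{x\})=\mu_S(p)p^{|x|}$. $D^{p}_{S,T}=B_{S,p}(\,\cdot\mid\max(\xi)\subseteq T)$. *)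

theory Defs
  imports "HOL-Probability.Probability"
begin

definition swap1 :: "('a \<Rightarrow> 'a \<Rightarrow> bool) \<Rightarrow> 'a list \<Rightarrow> 'a list \<Rightarrow> bool" where
  "swap1 R u v \<longleftrightarrow> (\<exists>x y a b. u = x @ [a, b] @ y \<and> v = x @ [b, a] @ y \<and> \<not> R a b)"

definition tr :: "('a \<Rightarrow> 'a \<Rightarrow> bool) \<Rightarrow> 'a list \<Rightarrow> 'a list set" where
  "tr R w = {v. equivclp (swap1 R) w v}"

definition traces :: "('a \<Rightarrow> 'a \<Rightarrow> bool) \<Rightarrow> 'a set \<Rightarrow> 'a list set set" where
  "traces R S = tr R ` lists S"

definition tunit :: "('a \<Rightarrow> 'a \<Rightarrow> bool) \<Rightarrow> 'a list set" where
  "tunit R = tr R []"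

definition tmult :: "('a \<Rightarrow> 'a \<Rightarrow> bool) \<Rightarrow> 'a list set \<Rightarrow> 'a list set \<Rightarrow> 'a list set" where
  "tmult R x y = (\<Union>u\<in>x. \<Union>v\<in>y. tr R (u @ v))"

definition tlen :: "'a list set \<Rightarrow> nat" where
  "tlen x = length (SOME w. w \<in> x)"

definition tmax :: "('a \<Rightarrow> 'a \<Rightarrow> bool) \<Rightarrow> 'a list set \<Rightarrow> 'a set" where
  "tmax R x = {a. \<exists>y \<in> range (tr R). x = tmult R y (tr R [a])}"

definition Lset :: "'a set \<Rightarrow> ('a \<Rightarrow> 'a \<Rightarrow> bool) \<Rightarrow> 'a \<Rightarrow> 'a set" where
  "Lset \<Sigma> R a = {b \<in> \<Sigma>. R a b}"

definition is_clique :: "('a \<Rightarrow> 'a \<Rightarrow> bool) \<Rightarrow> 'a set \<Rightarrow> 'a set \<Rightarrow> bool" where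
  "is_clique R S \<gamma> \<longleftrightarrow> \<gamma> \<subseteq> S \<and> (\<forall>a\<in>\<gamma>. \<forall>b\<in>\<gamma>. a \<noteq> b \<longrightarrow> \<not> R a b)"

definition mu :: "('a \<Rightarrow> 'a \<Rightarrow> bool) \<Rightarrow> 'a set \<Rightarrow> 'b::comm_ring_1 \<Rightarrow> 'b" where
  "mu R S X = (\<Sum>\<gamma> \<in> {\<gamma>. is_clique R S \<gamma>}. (-1) ^ card \<gamma> * X ^ card \<gamma>)"

text \<open>p_S: modulus of a (complex) root of smallest modulus of mu_S; +infinity if no roots
  (in particular p_{empty} = +infinity).\<close>
definition pS :: "('a \<Rightarrow> 'a \<Rightarrow> bool) \<Rightarrow> 'a set \<Rightarrow> ereal" where
  "pS R S = Inf ((\<lambda>z. ereal (cmod z)) ` {z::complex. mu R S z = 0})"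

definition Bw :: "('a \<Rightarrow> 'a \<Rightarrow> bool) \<Rightarrow> 'a set \<Rightarrow> real \<Rightarrow> 'a list set \<Rightarrow> real" where
  "Bw R S p x = mu R S p * p ^ tlen x"

definition Dpt :: "('a \<Rightarrow> 'a \<Rightarrow> bool) \<Rightarrow> 'a set \<Rightarrow> 'a set \<Rightarrow> real \<Rightarrow> 'a list set \<Rightarrow> real" where
  "Dpt R S T p x =
     (if x \<in> traces R S \<and> tmax R x \<subseteq> T
      then Bw R S p x / (\<Sum>\<^sub>\<infinity>y \<in> {y \<in> traces R S. tmax R y \<subseteq> T}. Bw R S p y)
      else 0)"

text \<open>Per iteration: a function call, two multiplications, an assignment to xi and one
  for the loop counter.\<close>
primrec loopA :: "('a \<Rightarrow> 'a \<Rightarrow> bool) \<Rightarrow> nat \<Rightarrow> nat \<Rightarrow> nat \<Rightarrow> ('a list set \<times> nat) pmf \<Rightarrow> 'a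
    \<Rightarrow> nat \<Rightarrow> ('a list set \<times> nat) pmf" where
  "loopA R ccall casg cmul D1 a 0 = return_pmf (tunit R, 0)"
| "loopA R ccall casg cmul D1 a (Suc k) =
     bind_pmf (loopA R ccall casg cmul D1 a k) (\<lambda>(\<xi>, c).
     bind_pmf D1 (\<lambda>(v, c').
     return_pmf (tmult R (tmult R \<xi> v) (tr R [a]), c + ccall + c' + 2 * cmul + casg + casg)))"

text \<open>Algorithm A_1(p,S,T), instrumented: returns the joint law of (output, number of steps).
  ch is the rule used to choose a_1 in S \<inter> T; cch, ccall, casg, cmul are the costs of a
  choice (also charged for the emptiness test of S \<inter> T), a function call, an assignment
  and a multiplication; g K is the cost of drawing the random integer K.
  The recursion is written with an explicit fuel argument n; A1 calls it with n = card S,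
  and since a_1 \<in> S every recursive call is on S - {a_1} with fuel card (S - {a_1}), so for
  finite S the fuel never runs out before S \<inter> T = {} (fuel 0 means S = {}).\<close>
primrec A1n :: "nat \<Rightarrow> 'a set \<Rightarrow> ('a \<Rightarrow> 'a \<Rightarrow> bool) \<Rightarrow> ('a set \<Rightarrow> 'a set \<Rightarrow> 'a) \<Rightarrow> real
    \<Rightarrow> nat \<Rightarrow> nat \<Rightarrow> nat \<Rightarrow> nat \<Rightarrow> (nat \<Rightarrow> nat) \<Rightarrow> 'a set \<Rightarrow> 'a set
    \<Rightarrow> ('a list set \<times> nat) pmf" where
  "A1n 0 \<Sigma> R ch p cch ccall casg cmul g S T = return_pmf (tunit R, cch + casg)"
| "A1n (Suc n) \<Sigma> R ch p cch ccall casg cmul g S T =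
    (if S \<inter> T = {} then return_pmf (tunit R, cch + casg)
     else
       let a = ch S T;
           r = 1 - mu R S p / mu R (S - {a}) p;
           D1 = A1n n \<Sigma> R ch p cch ccall casg cmul g (S - {a}) (Lset \<Sigma> R a);
           D2 = A1n n \<Sigma> R ch p cch ccall casg cmul g (S - {a}) T
       in bind_pmf (geometric_pmf (1 - r)) (\<lambda>K.
          bind_pmf (loopA R ccall casg cmul D1 a K) (\<lambda>(\<xi>, c).
          bind_pmf D2 (\<lambda>(v, c').
          return_pmf (tmult R \<xi> v,
             cch + cch + casg + g K + casg + c + ccall + c' + cmul + casg)))))"

definition A1 :: "'a set \<Rightarrow> ('a \<Rightarrow> 'a \<Rightarrow> bool) \<Rightarrow> ('a set \<Rightarrow> 'a set \<Rightarrow> 'a) \<Rightarrow> real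
    \<Rightarrow> nat \<Rightarrow> nat \<Rightarrow> nat \<Rightarrow> nat \<Rightarrow> (nat \<Rightarrow> nat) \<Rightarrow> 'a set \<Rightarrow> 'a set
    \<Rightarrow> ('a list set \<times> nat) pmf" where
  "A1 \<Sigma> R ch p cch ccall casg cmul g S T = A1n (card S) \<Sigma> R ch p cch ccall casg cmul g S T"

end

(*
  Traces are handled through words: by the projection lemma, two words represent the same
  trace iff their projections onto every pair of dependent letters agree, which makes maximal
  letters and cancellation explicit.

  Let a be the chosen letter of S \<inter> T. A trace over S whose maximal letters lie in T factors
  uniquely as \<xi> \<cdot> v, where a is the only maximal letter of \<xi> and v avoids a; and such a \<xi>
  with k + 1 letters a factors uniquely as \<xi>' \<cdot> u \<cdot> a, where \<xi>' is of the same kind with k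
  letters a and u is a trace over S - {a} whose maximal letters depend on a. These are exactly
  the shapes produced by the loop and the final recursive call of A_1, so by induction on |S|
  the output has weight p^|x| \<mu>_S(p) / \<mu>_{S-T}(p) at every x with max(x) \<subseteq> T; the
  recursion \<mu>_S = \<mu>_{S-a} - X \<mu>_{S-L(a)} on cliques is what makes the geometric number of
  iterations fit. As the weights sum to one, this evaluates the partition function and
  identifies the law with D^p_{S,T}; comparing the partition functions of M_{S'} \<subseteq> M_S then
  gives the positivity of all \<mu>_{S'}(p) that the induction needs.

  For the running time, every iteration of the loop contributes a letter a to the output, and
  the recursion depth is at most |S|.
*)

theory Submission
  imports Defs
begin

section \<open>The projection lemma\<close>

text \<open>The relation R is only assumed reflexive and symmetric on the alphabet, and
  swap1 lets a b commute as soon as \<not> R a b; so two distinct letters fail to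
  commute exactly when R relates them in both directions.\<close>

definition dependent_letters :: "('a \<Rightarrow> 'a \<Rightarrow> bool) \<Rightarrow> 'a \<Rightarrow> 'a \<Rightarrow> bool" where
  "dependent_letters R a b \<longleftrightarrow> a = b \<or> (R a b \<and> R b a)"

definition proj_pair :: "'a \<Rightarrow> 'a \<Rightarrow> 'a list \<Rightarrow> 'a list" where
  "proj_pair d e = filter (\<lambda>x. x = d \<or> x = e)"

definition proj_equiv :: "('a \<Rightarrow> 'a \<Rightarrow> bool) \<Rightarrow> 'a list \<Rightarrow> 'a list \<Rightarrow> bool" where
  "proj_equiv R u v \<longleftrightarrow> (\<forall>d e. dependent_letters R d e \<longrightarrow> proj_pair d e u = proj_pair d e v)"

lemma dependent_letters_refl [simp]: "dependent_letters R a a"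
  by (simp add: dependent_letters_def)

lemma proj_pair_Nil [simp]: "proj_pair d e [] = []"
  and proj_pair_append [simp]: "proj_pair d e (u @ v) = proj_pair d e u @ proj_pair d e v"
  and proj_pair_Cons: "proj_pair d e (c # v) = (if c = d \<or> c = e then c # proj_pair d e v else proj_pair d e v)"
  by (simp_all add: proj_pair_def)

lemma proj_equiv_refl [simp]: "proj_equiv R u u"
  and proj_equiv_sym: "proj_equiv R u v \<Longrightarrow> proj_equiv R v u"
  and proj_equiv_trans: "proj_equiv R u v \<Longrightarrow> proj_equiv R v w \<Longrightarrow> proj_equiv R u w"
  and proj_equiv_append: "proj_equiv R u u' \<Longrightarrow> proj_equiv R v v' \<Longrightarrow> proj_equiv R (u @ v) (u' @ v')"
  and proj_equiv_cancel_right: "proj_equiv R (u @ z) (v @ z) \<Longrightarrow> proj_equiv R u v"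
  by (simp_all add: proj_equiv_def)

lemma count_list_eq_length_proj_pair: "count_list w a = length (proj_pair a a w)"
  by (induction w) (simp_all add: proj_pair_Cons)

lemma proj_equiv_count_list: "proj_equiv R u v \<Longrightarrow> count_list u a = count_list v a"
  by (simp add: proj_equiv_def count_list_eq_length_proj_pair)

lemma proj_equiv_mset: "proj_equiv R u v \<Longrightarrow> mset u = mset v"
  by (simp add: multiset_eq_iff count_mset proj_equiv_count_list)

lemma proj_equiv_set: "proj_equiv R u v \<Longrightarrow> set u = set v"
  by (drule proj_equiv_mset) (metis set_mset_mset)

lemma proj_equiv_length: "proj_equiv R u v \<Longrightarrow> length u = length v"
  by (drule proj_equiv_mset) (metis size_mset)

lemma proj_equiv_move_right:
  assumes "\<forall>x\<in>set y. \<not> dependent_letters R c x"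
  shows "proj_equiv R (c # y) (y @ [c])"
  unfolding proj_equiv_def
proof (intro allI impI)
  fix d e assume de: "dependent_letters R d e"
  show "proj_pair d e (c # y) = proj_pair d e (y @ [c])"
  proof (cases "c = d \<or> c = e")
    case True
    have "proj_pair d e y = []"
      unfolding proj_pair_def filter_empty_conv
    proof (intro ballI notI)
      fix x assume "x \<in> set y" "x = d \<or> x = e"
      with True de have "dependent_letters R c x" by (auto simp: dependent_letters_def)
      with assms \<open>x \<in> set y\<close> show False by blast
    qed
    then show ?thesis using True by (simp add: proj_pair_Cons)
  next
    case False
    then show ?thesis by (simp add: proj_pair_def)
  qed
qed

lemma swap1_imp_proj_equiv: "swap1 R u v \<Longrightarrow> proj_equiv R u v"
proof -
  assume "swap1 R u v"
  then obtain x y a b where u: "u = x @ [a, b] @ y" and v: "v = x @ [b, a] @ y" and "\<not> R a b"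
    unfolding swap1_def by blast
  show ?thesis
  proof (cases "a = b")
    case False
    with \<open>\<not> R a b\<close> have "proj_equiv R (a # [b]) ([b] @ [a])"
      by (intro proj_equiv_move_right) (simp add: dependent_letters_def)
    then show ?thesis unfolding u v by (intro proj_equiv_append) auto
  qed (simp add: u v)
qed

lemma equivclp_swap1_imp_proj_equiv: "equivclp (swap1 R) u v \<Longrightarrow> proj_equiv R u v"
proof (induction rule: equivclp_induct)
  case (step y z)
  then show ?case using swap1_imp_proj_equiv proj_equiv_sym proj_equiv_trans by metis
qed simp

lemma swap1_context:
  assumes "swap1 R u v"
  shows "swap1 R (l @ u @ r) (l @ v @ r)"
proof -
  obtain x y a b where "u = x @ [a, b] @ y" "v = x @ [b, a] @ y" "\<not> R a b"
    using assms unfolding swap1_def by blast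
  then have "l @ u @ r = (l @ x) @ [a, b] @ (y @ r)" "l @ v @ r = (l @ x) @ [b, a] @ (y @ r)"
    "\<not> R a b" by simp_all
  then show ?thesis unfolding swap1_def by blast
qed

lemma equivclp_swap1_context:
  assumes "equivclp (swap1 R) u v"
  shows "equivclp (swap1 R) (l @ u @ r) (l @ v @ r)"
  using assms
proof (induction rule: equivclp_induct)
  case (step y z)
  then show ?case using swap1_context equivclp_into_equivclp by metis
qed simp

lemma equivclp_swap1_move_right:
  assumes "\<forall>x\<in>set y. \<not> dependent_letters R c x"
  shows "equivclp (swap1 R) (xs @ c # y) (xs @ y @ [c])"
  using assms
proof (induction y arbitrary: xs)
  case (Cons x y)
  then have "\<not> R c x \<or> \<not> R x c"
    by (auto simp: dependent_letters_def)
  then have "swap1 R [c, x] [x, c] \<or> swap1 R [x, c] [c, x]"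
    unfolding swap1_def by (metis append_Nil append_Nil2)
  then have "equivclp (swap1 R) [c, x] [x, c]"
    by blast
  from equivclp_swap1_context[OF this, of xs y]
  have "equivclp (swap1 R) (xs @ c # x # y) (xs @ x # c # y)"
    by simp
  also have "equivclp (swap1 R) \<dots> (xs @ x # y @ [c])"
    using Cons.IH[of "xs @ [x]"] Cons.prems by simp
  finally show ?case by simp
qed simp

lemma last_proj_pair_other:
  assumes "c \<notin> set u" "x \<in> set u"
  shows "proj_pair c x u \<noteq> [] \<and> last (proj_pair c x u) = x"
proof -
  have "proj_pair c x u \<noteq> []" using assms by (auto simp: proj_pair_def filter_empty_conv)
  moreover have "last (proj_pair c x u) \<in> set (proj_pair c x u)" using calculation by simp
  then have "last (proj_pair c x u) = x" using assms(1) by (auto simp: proj_pair_def)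
  ultimately show ?thesis by simp
qed

lemma last_occurrence_independent:
  assumes "\<forall>d. dependent_letters R c d \<longrightarrow> last (proj_pair c d (u1 @ c # u2)) = c" and "c \<notin> set u2"
  shows "\<forall>x\<in>set u2. \<not> dependent_letters R c x"
proof (intro ballI notI)
  fix x assume x: "x \<in> set u2" and "dependent_letters R c x"
  have "x \<noteq> c" using x assms(2) by auto
  then have "last (proj_pair c x (u1 @ c # u2)) = x"
    using last_proj_pair_other[OF assms(2) x] by (simp add: proj_pair_Cons)
  then show False using assms \<open>dependent_letters R c x\<close> x by auto
qed

text \<open>The last letter c of v is moved, inside u, past the letters following its last
  occurrence, which are all independent of c.\<close>

lemma proj_equiv_imp_equivclp_swap1: "proj_equiv R u v \<Longrightarrow> equivclp (swap1 R) u v"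
proof (induction "length v" arbitrary: u v rule: less_induct)
  case less
  show ?case
  proof (cases v rule: rev_cases)
    case Nil
    then show ?thesis using proj_equiv_set[OF less.prems] by simp
  next
    case (snoc v' c)
    have "c \<in> set u" using proj_equiv_set[OF less.prems] snoc by simp
    then obtain u1 u2 where u: "u = u1 @ c # u2" and c: "c \<notin> set u2"
      using split_list_last by metis
    have "\<forall>d. dependent_letters R c d \<longrightarrow> last (proj_pair c d u) = c"
      using less.prems snoc unfolding proj_equiv_def by (auto simp: proj_pair_Cons)
    then have "\<forall>x\<in>set u2. \<not> dependent_letters R c x"
      unfolding u by (rule last_occurrence_independent[OF _ c])
    then have moved: "equivclp (swap1 R) u (u1 @ u2 @ [c])"
      unfolding u by (rule equivclp_swap1_move_right)
    have "proj_equiv R (u1 @ u2 @ [c]) v"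
      using proj_equiv_trans[OF proj_equiv_sym[OF equivclp_swap1_imp_proj_equiv[OF moved]] less.prems] .
    then have "proj_equiv R ((u1 @ u2) @ [c]) (v' @ [c])"
      using snoc by simp
    then have "proj_equiv R (u1 @ u2) v'"
      by (rule proj_equiv_cancel_right)
    then have "equivclp (swap1 R) (u1 @ u2) v'"
      using less.hyps snoc by simp
    from equivclp_swap1_context[OF this, of "[]" "[c]"]
    have "equivclp (swap1 R) (u1 @ u2 @ [c]) v"
      using snoc by simp
    with moved show ?thesis by (rule equivclp_trans)
  qed
qed

lemma mem_tr_iff: "w \<in> tr R u \<longleftrightarrow> proj_equiv R u w"
  unfolding tr_def mem_Collect_eq
  by (rule iffI[OF equivclp_swap1_imp_proj_equiv proj_equiv_imp_equivclp_swap1])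

lemma tr_eq_iff: "tr R u = tr R v \<longleftrightarrow> proj_equiv R u v"
proof
  assume "tr R u = tr R v"
  then show "proj_equiv R u v" by (metis mem_tr_iff proj_equiv_refl)
next
  assume "proj_equiv R u v"
  then show "tr R u = tr R v"
    unfolding set_eq_iff mem_tr_iff by (meson proj_equiv_sym proj_equiv_trans)
qed

lemma tmult_tr: "tmult R (tr R u) (tr R v) = tr R (u @ v)"
proof -
  have "tr R (u' @ v') = tr R (u @ v)" if "u' \<in> tr R u" "v' \<in> tr R v" for u' v'
    using that by (simp add: mem_tr_iff tr_eq_iff proj_equiv_append proj_equiv_sym)
  moreover have "tr R u \<noteq> {}" "tr R v \<noteq> {}"
    using mem_tr_iff proj_equiv_refl by blast+
  ultimately show ?thesis
    unfolding tmult_def by (simp cong: SUP_cong add: UN_constant)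
qed

lemma tlen_tr: "tlen (tr R w) = length w"
proof -
  have "(SOME x. x \<in> tr R w) \<in> tr R w" by (rule someI[of _ w]) (simp add: mem_tr_iff)
  then show ?thesis unfolding tlen_def by (metis mem_tr_iff proj_equiv_length)
qed

section \<open>Maximal letters and factorisations\<close>

definition word_max :: "('a \<Rightarrow> 'a \<Rightarrow> bool) \<Rightarrow> 'a list \<Rightarrow> 'a set" where
  "word_max R w = {b. \<exists>u. proj_equiv R w (u @ [b])}"

lemma tmax_tr: "tmax R (tr R w) = word_max R w"
  unfolding tmax_def word_max_def by (auto simp: tmult_tr tr_eq_iff)

lemma word_max_proj_equiv:
  assumes "proj_equiv R w w'"
  shows "word_max R w = word_max R w'"
proof -
  have "proj_equiv R w z \<longleftrightarrow> proj_equiv R w' z" for z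
    using assms proj_equiv_sym proj_equiv_trans by metis
  then show ?thesis unfolding word_max_def by simp
qed

lemma snoc_mem_word_max: "b \<in> word_max R (w @ [b])"
  unfolding word_max_def mem_Collect_eq by (rule exI[of _ w]) simp

lemma word_max_append_right: "word_max R y \<subseteq> word_max R (x @ y)"
proof
  fix b assume "b \<in> word_max R y"
  then obtain u where "proj_equiv R y (u @ [b])" by (auto simp: word_max_def)
  then have "proj_equiv R (x @ y) ((x @ u) @ [b])"
    using proj_equiv_append[OF proj_equiv_refl] by simp
  then show "b \<in> word_max R (x @ y)"
    unfolding word_max_def mem_Collect_eq by (intro exI[of _ "x @ u"])
qed

lemma mem_word_max_iff:
  "b \<in> word_max R w \<longleftrightarrow> b \<in> set w \<and> (\<forall>d. dependent_letters R b d \<longrightarrow> last (proj_pair b d w) = b)"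
proof
  assume "b \<in> word_max R w"
  then obtain u where u: "proj_equiv R w (u @ [b])" by (auto simp: word_max_def)
  then have "b \<in> set w" using proj_equiv_set[OF u] by simp
  moreover have "last (proj_pair b d w) = b" if "dependent_letters R b d" for d
  proof -
    have "proj_pair b d w = proj_pair b d (u @ [b])" using u that by (simp add: proj_equiv_def)
    then show ?thesis by (simp add: proj_pair_def)
  qed
  ultimately show "b \<in> set w \<and> (\<forall>d. dependent_letters R b d \<longrightarrow> last (proj_pair b d w) = b)"
    by simp
next
  assume b: "b \<in> set w \<and> (\<forall>d. dependent_letters R b d \<longrightarrow> last (proj_pair b d w) = b)"
  then obtain u1 u2 where u: "w = u1 @ b # u2" and "b \<notin> set u2"
    using split_list_last[of b w] by blast
  have "\<forall>x\<in>set u2. \<not> dependent_letters R b x"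
    by (rule last_occurrence_independent[OF _ \<open>b \<notin> set u2\<close>]) (use b u in simp)
  then have "equivclp (swap1 R) w (u1 @ u2 @ [b])"
    unfolding u by (rule equivclp_swap1_move_right)
  from equivclp_swap1_imp_proj_equiv[OF this]
  have "proj_equiv R w ((u1 @ u2) @ [b])" by simp
  then show "b \<in> word_max R w" unfolding word_max_def mem_Collect_eq by (rule exI)
qed

lemma word_max_Nil [simp]: "word_max R [] = {}"
  by (simp add: mem_word_max_iff set_eq_iff)

lemma word_max_singleton [simp]: "word_max R [c] = {c}"
  by (auto simp: mem_word_max_iff proj_pair_def)

lemma last_mem_word_max: "w \<noteq> [] \<Longrightarrow> last w \<in> word_max R w"
  by (metis append_butlast_last_id snoc_mem_word_max)

lemma mem_word_max_appendE:
  assumes "b \<in> word_max R (x @ y)"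
  obtains "b \<in> word_max R y" | "b \<in> word_max R x" "\<forall>d\<in>set y. \<not> dependent_letters R b d"
proof (cases "b \<in> set y")
  case True
  have "last (proj_pair b d y) = b" if "dependent_letters R b d" for d
  proof -
    have "last (proj_pair b d (x @ y)) = b" using assms that by (simp add: mem_word_max_iff)
    moreover have "proj_pair b d y \<noteq> []" using True by (auto simp: proj_pair_def filter_empty_conv)
    ultimately show ?thesis by simp
  qed
  with True have "b \<in> word_max R y" by (simp add: mem_word_max_iff)
  then show thesis by (rule that(1))
next
  case False
  have indep: "\<forall>d\<in>set y. \<not> dependent_letters R b d"
  proof (intro ballI notI)
    fix d assume d: "d \<in> set y" "dependent_letters R b d"
    have "last (proj_pair b d (x @ y)) = d"
      using last_proj_pair_other[OF False d(1)] by simp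
    moreover have "last (proj_pair b d (x @ y)) = b" using assms d by (simp add: mem_word_max_iff)
    ultimately show False using d False by auto
  qed
  have "\<forall>d. dependent_letters R b d \<longrightarrow> proj_pair b d y = []"
    using indep False by (auto simp: proj_pair_def filter_empty_conv)
  then have "b \<in> word_max R x" using assms False by (auto simp: mem_word_max_iff)
  then show thesis using indep by (rule that(2))
qed

lemma word_max_append_subset: "word_max R (x @ y) \<subseteq> word_max R x \<union> word_max R y"
proof
  fix b assume "b \<in> word_max R (x @ y)"
  then show "b \<in> word_max R x \<union> word_max R y" by (rule mem_word_max_appendE) simp_all
qed

lemma exists_max_factorisation:
  "\<exists>\<xi> v. proj_equiv R w (\<xi> @ v) \<and> word_max R \<xi> \<subseteq> {a} \<and> a \<notin> set v"
proof (induction w)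
  case Nil
  show ?case by (rule exI[of _ "[]"], rule exI[of _ "[]"]) simp
next
  case (Cons c w)
  then obtain \<xi> v where fac: "proj_equiv R w (\<xi> @ v)" "word_max R \<xi> \<subseteq> {a}" "a \<notin> set v"
    by blast
  have cw: "proj_equiv R (c # w) (c # \<xi> @ v)"
    using proj_equiv_append[OF proj_equiv_refl[of R "[c]"] fac(1)] by simp
  show ?case
  proof (cases "c = a \<or> (\<exists>x\<in>set \<xi>. dependent_letters R c x)")
    case True
    have "word_max R ([c] @ \<xi>) \<subseteq> {a}"
    proof
      fix b assume "b \<in> word_max R ([c] @ \<xi>)"
      then show "b \<in> {a}"
      proof (rule mem_word_max_appendE)
        assume "b \<in> word_max R \<xi>"
        then show ?thesis using fac(2) by blast
      next
        assume "b \<in> word_max R [c]" "\<forall>d\<in>set \<xi>. \<not> dependent_letters R b d"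
        then show ?thesis using True by auto
      qed
    qed
    then show ?thesis
      by (rule_tac exI[of _ "c # \<xi>"], rule_tac exI[of _ v]) (use cw fac(3) in simp)
  next
    case False
    then have "proj_equiv R (c # \<xi>) (\<xi> @ [c])" by (intro proj_equiv_move_right) auto
    then have "proj_equiv R (c # \<xi> @ v) (\<xi> @ c # v)"
      using proj_equiv_append[OF _ proj_equiv_refl[of R v]] by fastforce
    then have "proj_equiv R (c # w) (\<xi> @ c # v)" using proj_equiv_trans[OF cw] by simp
    then show ?thesis
      by (rule_tac exI[of _ \<xi>], rule_tac exI[of _ "c # v"]) (use False fac(2,3) in auto)
  qed
qed

lemma max_factorisation_unique:
  assumes "proj_equiv R (\<xi> @ v) (\<xi>' @ v')" "word_max R \<xi> \<subseteq> {a}" "word_max R \<xi>' \<subseteq> {a}"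
    and "a \<notin> set v" "a \<notin> set v'"
  shows "proj_equiv R \<xi> \<xi>' \<and> proj_equiv R v v'"
  using assms(1,4,5)
proof (induction v arbitrary: v' rule: rev_induct)
  case Nil
  have "v' = []"
  proof (rule ccontr)
    assume "v' \<noteq> []"
    then have "last v' \<in> word_max R (\<xi>' @ v')"
      using last_mem_word_max[of v'] word_max_append_right[where x="\<xi>'"] by blast
    then have "last v' = a"
      using assms(2) word_max_proj_equiv[OF Nil(1)] by auto
    then show False using Nil(3) last_in_set[OF \<open>v' \<noteq> []\<close>] by simp
  qed
  then show ?case using Nil(1) by simp
next
  case (snoc c v)
  have "c \<noteq> a" using snoc.prems(2) by auto
  have "c \<in> word_max R ((\<xi> @ v) @ [c])" by (rule snoc_mem_word_max)
  then have "c \<in> word_max R (\<xi>' @ v')"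
    using word_max_proj_equiv[OF snoc.prems(1)] by simp
  then have "c \<in> word_max R v'"
    by (rule mem_word_max_appendE) (use assms(3) \<open>c \<noteq> a\<close> in auto)
  then obtain v2 where v2: "proj_equiv R v' (v2 @ [c])" by (auto simp: word_max_def)
  have "proj_equiv R ((\<xi> @ v) @ [c]) ((\<xi>' @ v2) @ [c])"
    using proj_equiv_trans[OF snoc.prems(1) proj_equiv_append[OF proj_equiv_refl v2]] by simp
  then have "proj_equiv R (\<xi> @ v) (\<xi>' @ v2)" by (rule proj_equiv_cancel_right)
  moreover have "a \<notin> set v2" using proj_equiv_set[OF v2] snoc.prems(3) by auto
  ultimately have "proj_equiv R \<xi> \<xi>' \<and> proj_equiv R v v2"
    using snoc.IH snoc.prems(2) by simp
  moreover have "proj_equiv R (v2 @ [c]) v'" using v2 by (rule proj_equiv_sym)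
  ultimately show ?case
    using proj_equiv_trans[OF proj_equiv_append[OF _ proj_equiv_refl[of R "[c]"]]] by blast
qed

section \<open>Pyramids\<close>

definition traces_max_in :: "('a \<Rightarrow> 'a \<Rightarrow> bool) \<Rightarrow> 'a set \<Rightarrow> 'a set \<Rightarrow> 'a list set set" where
  "traces_max_in R S T = {x \<in> traces R S. tmax R x \<subseteq> T}"

definition pyramids :: "('a \<Rightarrow> 'a \<Rightarrow> bool) \<Rightarrow> 'a set \<Rightarrow> 'a \<Rightarrow> nat \<Rightarrow> 'a list set set" where
  "pyramids R S a k = {tr R w | w. w \<in> lists S \<and> count_list w a = k \<and> word_max R w \<subseteq> {a}}"

lemma tr_mem_traces_iff: "tr R w \<in> traces R S \<longleftrightarrow> w \<in> lists S"
proof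
  assume "tr R w \<in> traces R S"
  then obtain w' where "w' \<in> lists S" "tr R w = tr R w'"
    unfolding traces_def by blast
  then show "w \<in> lists S" by (metis tr_eq_iff proj_equiv_set in_lists_conv_set)
qed (simp add: traces_def)

lemma tr_mem_traces_max_in_iff:
  "tr R w \<in> traces_max_in R S T \<longleftrightarrow> w \<in> lists S \<and> word_max R w \<subseteq> T"
  by (simp add: traces_max_in_def tr_mem_traces_iff tmax_tr)

lemma tr_mem_pyramids_iff:
  "tr R w \<in> pyramids R S a k \<longleftrightarrow> w \<in> lists S \<and> count_list w a = k \<and> word_max R w \<subseteq> {a}"
proof
  assume "tr R w \<in> pyramids R S a k"
  then obtain w' where w': "proj_equiv R w w'" "w' \<in> lists S" "count_list w' a = k"
    "word_max R w' \<subseteq> {a}"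
    by (auto simp: pyramids_def tr_eq_iff)
  then show "w \<in> lists S \<and> count_list w a = k \<and> word_max R w \<subseteq> {a}"
    using proj_equiv_set[OF w'(1)] proj_equiv_count_list[OF w'(1)] word_max_proj_equiv[OF w'(1)]
    by (simp add: in_lists_conv_set)
qed (auto simp: pyramids_def)

lemma pyramidsE:
  assumes "x \<in> pyramids R S a k"
  obtains w where "x = tr R w" "w \<in> lists S" "count_list w a = k" "word_max R w \<subseteq> {a}"
  using assms by (auto simp: pyramids_def)

lemma traces_max_inE:
  assumes "x \<in> traces_max_in R S T"
  obtains w where "x = tr R w" "w \<in> lists S" "word_max R w \<subseteq> T"
proof -
  obtain w where "x = tr R w" using assms by (auto simp: traces_max_in_def traces_def)
  with assms show thesis using that by (simp add: tr_mem_traces_max_in_iff)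
qed

lemma traces_max_in_subset_range: "traces_max_in R S T \<subseteq> range (tr R)"
  by (auto simp: traces_max_in_def traces_def)

lemma pyramids_subset_range: "pyramids R S a k \<subseteq> range (tr R)"
  by (auto simp: pyramids_def)

lemma tlen_tmult:
  "x \<in> range (tr R) \<Longrightarrow> y \<in> range (tr R) \<Longrightarrow> tlen (tmult R x y) = tlen x + tlen y"
  by (auto simp: tmult_tr tlen_tr)

lemma tmult_mem_range: "x \<in> range (tr R) \<Longrightarrow> y \<in> range (tr R) \<Longrightarrow> tmult R x y \<in> range (tr R)"
  by (auto simp: tmult_tr)

lemma tmult_cancel_right:
  assumes "x \<in> range (tr R)" "y \<in> range (tr R)" "z \<in> range (tr R)" "tmult R x z = tmult R y z"
  shows "x = y"
proof -
  obtain u v w where "x = tr R u" "y = tr R v" "z = tr R w" using assms(1-3) by blast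
  with assms(4) show ?thesis by (simp add: tmult_tr tr_eq_iff proj_equiv_cancel_right)
qed

lemma traces_mono: "S' \<subseteq> S \<Longrightarrow> traces R S' \<subseteq> traces R S"
  by (auto simp: traces_def intro: lists_mono[THEN subsetD])

lemma traces_max_in_self: "traces_max_in R S S = traces R S"
proof -
  have "tmax R x \<subseteq> S" if "x \<in> traces R S" for x
    using that by (auto simp: traces_def tmax_tr mem_word_max_iff)
  then show ?thesis by (auto simp: traces_max_in_def)
qed

lemma traces_max_in_disjoint:
  assumes "S \<inter> T = {}"
  shows "traces_max_in R S T = {tunit R}"
proof -
  have "w = []" if "w \<in> lists S" "word_max R w \<subseteq> T" for w
  proof (rule ccontr)
    assume "w \<noteq> []"
    then have "last w \<in> S \<inter> T"
      using that last_mem_word_max[of w R] last_in_set[of w] by auto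
    with assms show False by blast
  qed
  then show ?thesis using traces_max_in_subset_range
    by (fastforce simp: tunit_def tr_mem_traces_max_in_iff)
qed

lemma pyramids_0: "pyramids R S a 0 = {tunit R}"
proof -
  have "w = []" if "count_list w a = 0" "word_max R w \<subseteq> {a}" for w
  proof (rule ccontr)
    assume "w \<noteq> []"
    then have "last w = a" using that(2) last_mem_word_max[of w R] by auto
    then show False
      using that(1) last_in_set[OF \<open>w \<noteq> []\<close>] by (simp add: count_list_0_iff)
  qed
  then show ?thesis by (auto simp: pyramids_def tunit_def)
qed

lemma pyramids_disjoint: "k \<noteq> k' \<Longrightarrow> pyramids R S a k \<inter> pyramids R S a k' = {}"
  using pyramids_subset_range[of R S a k] by (auto simp: tr_mem_pyramids_iff)

lemma max_factorisation_mem: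
  assumes "a \<in> T" "\<xi> \<in> pyramids R S a k" "v \<in> traces_max_in R (S - {a}) T"
  shows "tmult R \<xi> v \<in> traces_max_in R S T"
proof -
  obtain xw where xw: "\<xi> = tr R xw" "xw \<in> lists S" "word_max R xw \<subseteq> {a}"
    using assms(2) by (rule pyramidsE)
  obtain vw where vw: "v = tr R vw" "vw \<in> lists (S - {a})" "word_max R vw \<subseteq> T"
    using assms(3) by (rule traces_max_inE)
  have "word_max R (xw @ vw) \<subseteq> T"
    using word_max_append_subset[of R xw vw] xw(3) vw(3) assms(1) by blast
  moreover have "xw @ vw \<in> lists S" using xw(2) vw(2) by auto
  ultimately show ?thesis using xw(1) vw(1) by (simp add: tmult_tr tr_mem_traces_max_in_iff)
qed

lemma traces_max_in_factorisation:
  assumes "x \<in> traces_max_in R S T"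
  obtains k \<xi> v where "\<xi> \<in> pyramids R S a k" "v \<in> traces_max_in R (S - {a}) T" "x = tmult R \<xi> v"
proof -
  obtain w where w: "x = tr R w" "w \<in> lists S" "word_max R w \<subseteq> T"
    using assms by (rule traces_max_inE)
  obtain \<xi> v where fac: "proj_equiv R w (\<xi> @ v)" "word_max R \<xi> \<subseteq> {a}" "a \<notin> set v"
    using exists_max_factorisation[of R w a] by blast
  have sets: "set w = set \<xi> \<union> set v" using proj_equiv_set[OF fac(1)] by simp
  have "tr R \<xi> \<in> pyramids R S a (count_list \<xi> a)"
    using w(2) sets fac(2) by (simp add: tr_mem_pyramids_iff in_lists_conv_set)
  moreover have "word_max R v \<subseteq> T"
    using word_max_append_right[of R v \<xi>] word_max_proj_equiv[OF fac(1)] w(3) by blast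
  then have "tr R v \<in> traces_max_in R (S - {a}) T"
    using w(2) sets fac(3) by (auto simp: tr_mem_traces_max_in_iff)
  moreover have "x = tmult R (tr R \<xi>) (tr R v)" using w(1) fac(1) by (simp add: tmult_tr tr_eq_iff)
  ultimately show thesis by (rule that)
qed

lemma max_factorisation_inj:
  assumes "\<xi>1 \<in> pyramids R S a k1" "v1 \<in> traces_max_in R (S - {a}) T"
    and "\<xi>2 \<in> pyramids R S a k2" "v2 \<in> traces_max_in R (S - {a}) T"
    and eq: "tmult R \<xi>1 v1 = tmult R \<xi>2 v2"
  shows "\<xi>1 = \<xi>2 \<and> v1 = v2"
proof -
  obtain x1 where x1: "\<xi>1 = tr R x1" "word_max R x1 \<subseteq> {a}"
    using assms(1) by (rule pyramidsE)
  obtain x2 where x2: "\<xi>2 = tr R x2" "word_max R x2 \<subseteq> {a}"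
    using assms(3) by (rule pyramidsE)
  obtain y1 where y1: "v1 = tr R y1" "y1 \<in> lists (S - {a})"
    using assms(2) by (rule traces_max_inE)
  obtain y2 where y2: "v2 = tr R y2" "y2 \<in> lists (S - {a})"
    using assms(4) by (rule traces_max_inE)
  have "proj_equiv R (x1 @ y1) (x2 @ y2)"
    using eq x1(1) x2(1) y1(1) y2(1) by (simp add: tmult_tr tr_eq_iff)
  moreover have "a \<notin> set y1" "a \<notin> set y2" using y1(2) y2(2) by auto
  ultimately have "proj_equiv R x1 x2 \<and> proj_equiv R y1 y2"
    by (rule max_factorisation_unique[OF _ x1(2) x2(2)])
  then show ?thesis using x1(1) x2(1) y1(1) y2(1) by (simp add: tr_eq_iff)
qed

lemma tmult_notin_other_pyramids:
  assumes "\<xi> \<in> pyramids R S a k" "v \<in> traces_max_in R (S - {a}) T" "K \<noteq> k"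
  shows "tmult R \<xi> v \<notin> (\<lambda>(\<xi>, v). tmult R \<xi> v) ` (pyramids R S a K \<times> traces_max_in R (S - {a}) T)"
proof
  assume "tmult R \<xi> v \<in> (\<lambda>(\<xi>, v). tmult R \<xi> v) ` (pyramids R S a K \<times> traces_max_in R (S - {a}) T)"
  then obtain \<xi>' v' where \<xi>': "\<xi>' \<in> pyramids R S a K" "v' \<in> traces_max_in R (S - {a}) T"
    "tmult R \<xi>' v' = tmult R \<xi> v"
    by auto
  from \<xi>'(3) have "\<xi>' = \<xi> \<and> v' = v" by (rule max_factorisation_inj[OF \<xi>'(1,2) assms(1,2)])
  then have "\<xi> \<in> pyramids R S a K \<inter> pyramids R S a k" using \<xi>'(1) assms(1) by simp
  then show False by (simp add: pyramids_disjoint[OF assms(3)])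
qed

lemma bij_betw_max_factorisation:
  assumes "a \<in> T"
  shows "bij_betw (\<lambda>(\<xi>, v). tmult R \<xi> v)
    ((\<Union>k. pyramids R S a k) \<times> traces_max_in R (S - {a}) T) (traces_max_in R S T)"
  unfolding bij_betw_def
proof (intro conjI subset_antisym subsetI)
  show "inj_on (\<lambda>(\<xi>, v). tmult R \<xi> v) ((\<Union>k. pyramids R S a k) \<times> traces_max_in R (S - {a}) T)"
  proof (rule inj_onI)
    fix p q
    assume "p \<in> (\<Union>k. pyramids R S a k) \<times> traces_max_in R (S - {a}) T"
      and "q \<in> (\<Union>k. pyramids R S a k) \<times> traces_max_in R (S - {a}) T"
      and eq: "(\<lambda>(\<xi>, v). tmult R \<xi> v) p = (\<lambda>(\<xi>, v). tmult R \<xi> v) q"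
    then obtain \<xi>1 v1 k1 \<xi>2 v2 k2 where "p = (\<xi>1, v1)" "q = (\<xi>2, v2)"
      "\<xi>1 \<in> pyramids R S a k1" "v1 \<in> traces_max_in R (S - {a}) T"
      "\<xi>2 \<in> pyramids R S a k2" "v2 \<in> traces_max_in R (S - {a}) T"
      by (cases p, cases q) auto
    with eq show "p = q" using max_factorisation_inj by simp
  qed
  show "x \<in> traces_max_in R S T"
    if "x \<in> (\<lambda>(\<xi>, v). tmult R \<xi> v) ` ((\<Union>k. pyramids R S a k) \<times> traces_max_in R (S - {a}) T)" for x
    using that max_factorisation_mem[OF assms] by fast
  show "x \<in> (\<lambda>(\<xi>, v). tmult R \<xi> v) ` ((\<Union>k. pyramids R S a k) \<times> traces_max_in R (S - {a}) T)"
    if x: "x \<in> traces_max_in R S T" for x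
  proof -
    obtain k \<xi> v where "\<xi> \<in> pyramids R S a k" "v \<in> traces_max_in R (S - {a}) T"
      "x = tmult R \<xi> v"
      using x by (rule traces_max_in_factorisation)
    then show ?thesis by (intro image_eqI[where x="(\<xi>, v)"]) auto
  qed
qed

lemma pyramids_Suc_inj:
  assumes mem: "\<xi>1 \<in> pyramids R S a k" "v1 \<in> traces_max_in R (S - {a}) T"
      "\<xi>2 \<in> pyramids R S a k" "v2 \<in> traces_max_in R (S - {a}) T"
    and eq: "tmult R (tmult R \<xi>1 v1) (tr R [a]) = tmult R (tmult R \<xi>2 v2) (tr R [a])"
  shows "\<xi>1 = \<xi>2 \<and> v1 = v2"
proof -
  have "\<xi>1 \<in> range (tr R)" "\<xi>2 \<in> range (tr R)"
    using subsetD[OF pyramids_subset_range mem(1)] subsetD[OF pyramids_subset_range mem(3)] .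
  moreover have "v1 \<in> range (tr R)" "v2 \<in> range (tr R)"
    using subsetD[OF traces_max_in_subset_range mem(2)] subsetD[OF traces_max_in_subset_range mem(4)] .
  ultimately have "tmult R \<xi>1 v1 \<in> range (tr R)" "tmult R \<xi>2 v2 \<in> range (tr R)"
    by (simp_all add: tmult_mem_range)
  then have "tmult R \<xi>1 v1 = tmult R \<xi>2 v2"
    using tmult_cancel_right[OF _ _ rangeI eq] by blast
  then show ?thesis by (rule max_factorisation_inj[OF mem])
qed

locale dependence_alphabet =
  fixes \<Sigma> :: "'a set" and R :: "'a \<Rightarrow> 'a \<Rightarrow> bool"
  assumes finite_alphabet: "finite \<Sigma>"
    and R_refl: "a \<in> \<Sigma> \<Longrightarrow> R a a"
    and R_sym: "a \<in> \<Sigma> \<Longrightarrow> b \<in> \<Sigma> \<Longrightarrow> R a b \<Longrightarrow> R b a"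
begin

lemma dependent_letters_iff_mem_Lset:
  "a \<in> \<Sigma> \<Longrightarrow> b \<in> \<Sigma> \<Longrightarrow> dependent_letters R b a \<longleftrightarrow> b \<in> Lset \<Sigma> R a"
  using R_refl R_sym by (auto simp: dependent_letters_def Lset_def)

lemma pyramids_Suc_mem:
  assumes "S \<subseteq> \<Sigma>" "a \<in> S"
    and "\<xi> \<in> pyramids R S a k" "v \<in> traces_max_in R (S - {a}) (Lset \<Sigma> R a)"
  shows "tmult R (tmult R \<xi> v) (tr R [a]) \<in> pyramids R S a (Suc k)"
proof -
  obtain xw where xw: "\<xi> = tr R xw" "xw \<in> lists S" "count_list xw a = k" "word_max R xw \<subseteq> {a}"
    using assms(3) by (rule pyramidsE)
  obtain vw where vw: "v = tr R vw" "vw \<in> lists (S - {a})" "word_max R vw \<subseteq> Lset \<Sigma> R a"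
    using assms(4) by (rule traces_max_inE)
  have "b = a" if b: "b \<in> word_max R ((xw @ vw) @ [a])" for b
    using b
  proof (rule mem_word_max_appendE)
    assume "b \<in> word_max R (xw @ vw)" "\<forall>d\<in>set [a]. \<not> dependent_letters R b d"
    then have indep: "\<not> dependent_letters R b a" by simp
    from \<open>b \<in> word_max R (xw @ vw)\<close> show "b = a"
    proof (rule mem_word_max_appendE)
      assume "b \<in> word_max R vw"
      moreover have "set vw \<subseteq> \<Sigma>" using vw(2) assms(1) by auto
      ultimately have "b \<in> \<Sigma>" "b \<in> Lset \<Sigma> R a"
        using vw(3) mem_word_max_iff[of b R vw] by auto
      then show "b = a" using indep dependent_letters_iff_mem_Lset assms(1,2) by blast
    next
      assume "b \<in> word_max R xw"
      then show "b = a" using xw(4) by blast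
    qed
  qed simp
  moreover have "count_list vw a = 0" using vw(2) by (auto simp: count_list_0_iff)
  ultimately have "tr R ((xw @ vw) @ [a]) \<in> pyramids R S a (Suc k)"
    using xw vw assms(2) by (auto simp: tr_mem_pyramids_iff)
  then show ?thesis using xw(1) vw(1) by (simp add: tmult_tr)
qed

lemma word_max_below_top:
  assumes "S \<subseteq> \<Sigma>" "a \<in> S" "set v \<subseteq> S - {a}" "word_max R (\<xi> @ v @ [a]) \<subseteq> {a}"
  shows "word_max R v \<subseteq> Lset \<Sigma> R a"
proof
  fix b assume "b \<in> word_max R v"
  then obtain v1 where v1: "proj_equiv R v (v1 @ [b])" by (auto simp: word_max_def)
  have "b \<in> set v" using proj_equiv_set[OF v1] by simp
  then have b: "b \<in> \<Sigma>" "b \<noteq> a" using assms(1,3) by auto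
  show "b \<in> Lset \<Sigma> R a"
  proof (rule ccontr)
    assume "b \<notin> Lset \<Sigma> R a"
    then have "\<not> dependent_letters R b a"
      using dependent_letters_iff_mem_Lset assms(1,2) b(1) by blast
    then have "proj_equiv R (b # [a]) ([a] @ [b])" by (intro proj_equiv_move_right) simp
    then have "proj_equiv R (\<xi> @ v @ [a]) ((\<xi> @ v1 @ [a]) @ [b])"
      using proj_equiv_append[OF proj_equiv_refl[of R \<xi>] proj_equiv_append[OF v1 proj_equiv_refl[of R "[a]"]]]
        proj_equiv_append[OF proj_equiv_refl[of R "\<xi> @ v1"]] proj_equiv_trans by fastforce
    then have "b \<in> word_max R (\<xi> @ v @ [a])" unfolding word_max_def by blast
    then show False using assms(4) b(2) by blast
  qed
qed

lemma pyramids_Suc_factorisation: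
  assumes "S \<subseteq> \<Sigma>" "a \<in> S" "\<zeta> \<in> pyramids R S a (Suc k)"
  obtains \<xi> v where "\<xi> \<in> pyramids R S a k" "v \<in> traces_max_in R (S - {a}) (Lset \<Sigma> R a)"
    "\<zeta> = tmult R (tmult R \<xi> v) (tr R [a])"
proof -
  obtain w where w: "\<zeta> = tr R w" "w \<in> lists S" "count_list w a = Suc k" "word_max R w \<subseteq> {a}"
    using assms(3) by (rule pyramidsE)
  then have "w \<noteq> []" by auto
  then have "a \<in> word_max R w" using w(4) last_mem_word_max[of w R] by auto
  then obtain u where u: "proj_equiv R w (u @ [a])" by (auto simp: word_max_def)
  obtain \<xi> v where fac: "proj_equiv R u (\<xi> @ v)" "word_max R \<xi> \<subseteq> {a}" "a \<notin> set v"
    using exists_max_factorisation[of R u a] by blast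
  have wu: "proj_equiv R w (\<xi> @ v @ [a])"
    using proj_equiv_trans[OF u proj_equiv_append[OF fac(1) proj_equiv_refl[of R "[a]"]]] by simp
  have sets: "set w = set \<xi> \<union> set v \<union> {a}" using proj_equiv_set[OF wu] by auto
  have "count_list \<xi> a = k" using proj_equiv_count_list[OF wu, of a] w(3) fac(3) by simp
  then have "tr R \<xi> \<in> pyramids R S a k"
    using w(2) sets fac(2) by (simp add: tr_mem_pyramids_iff in_lists_conv_set)
  moreover have "word_max R v \<subseteq> Lset \<Sigma> R a"
  proof (rule word_max_below_top[OF assms(1,2)])
    show "set v \<subseteq> S - {a}" using sets w(2) fac(3) by auto
    show "word_max R (\<xi> @ v @ [a]) \<subseteq> {a}" using w(4) word_max_proj_equiv[OF wu] by simp
  qed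
  then have "tr R v \<in> traces_max_in R (S - {a}) (Lset \<Sigma> R a)"
    using sets w(2) fac(3) by (auto simp: tr_mem_traces_max_in_iff)
  moreover have "\<zeta> = tmult R (tmult R (tr R \<xi>) (tr R v)) (tr R [a])"
    using w(1) wu by (simp add: tmult_tr tr_eq_iff)
  ultimately show thesis by (rule that)
qed

lemma bij_betw_pyramids_Suc:
  assumes "S \<subseteq> \<Sigma>" "a \<in> S"
  shows "bij_betw (\<lambda>(\<xi>, v). tmult R (tmult R \<xi> v) (tr R [a]))
    (pyramids R S a k \<times> traces_max_in R (S - {a}) (Lset \<Sigma> R a)) (pyramids R S a (Suc k))"
  unfolding bij_betw_def
proof (intro conjI subset_antisym subsetI)
  show "inj_on (\<lambda>(\<xi>, v). tmult R (tmult R \<xi> v) (tr R [a]))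
    (pyramids R S a k \<times> traces_max_in R (S - {a}) (Lset \<Sigma> R a))"
  proof (rule inj_onI, clarify)
    fix \<xi>1 v1 \<xi>2 v2
    assume "\<xi>1 \<in> pyramids R S a k" "v1 \<in> traces_max_in R (S - {a}) (Lset \<Sigma> R a)"
      "\<xi>2 \<in> pyramids R S a k" "v2 \<in> traces_max_in R (S - {a}) (Lset \<Sigma> R a)"
      "tmult R (tmult R \<xi>1 v1) (tr R [a]) = tmult R (tmult R \<xi>2 v2) (tr R [a])"
    then show "\<xi>1 = \<xi>2 \<and> v1 = v2" by (rule pyramids_Suc_inj)
  qed
  show "\<zeta> \<in> pyramids R S a (Suc k)"
    if \<zeta>: "\<zeta> \<in> (\<lambda>(\<xi>, v). tmult R (tmult R \<xi> v) (tr R [a])) `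
      (pyramids R S a k \<times> traces_max_in R (S - {a}) (Lset \<Sigma> R a))" for \<zeta>
  proof -
    obtain \<xi> v where "\<xi> \<in> pyramids R S a k" "v \<in> traces_max_in R (S - {a}) (Lset \<Sigma> R a)"
      "\<zeta> = tmult R (tmult R \<xi> v) (tr R [a])"
      using \<zeta> by auto
    then show ?thesis using pyramids_Suc_mem[OF assms] by simp
  qed
  show "\<zeta> \<in> (\<lambda>(\<xi>, v). tmult R (tmult R \<xi> v) (tr R [a])) `
      (pyramids R S a k \<times> traces_max_in R (S - {a}) (Lset \<Sigma> R a))"
    if \<zeta>: "\<zeta> \<in> pyramids R S a (Suc k)" for \<zeta>
  proof -
    obtain \<xi> v where "\<xi> \<in> pyramids R S a k" "v \<in> traces_max_in R (S - {a}) (Lset \<Sigma> R a)"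
      "\<zeta> = tmult R (tmult R \<xi> v) (tr R [a])"
      using assms \<zeta> by (rule pyramids_Suc_factorisation)
    then show ?thesis by (intro image_eqI[where x="(\<xi>, v)"]) auto
  qed
qed

end

section \<open>The clique polynomial\<close>

lemma finite_cliques: "finite S \<Longrightarrow> finite {\<gamma>. is_clique R S \<gamma>}"
  by (rule finite_subset[of _ "Pow S"]) (auto simp: is_clique_def)

lemma mu_at_0:
  assumes "finite S"
  shows "mu R S (0::'b::comm_ring_1) = 1"
proof -
  have "mu R S (0::'b) = (\<Sum>\<gamma>\<in>{\<gamma>. is_clique R S \<gamma>}. if \<gamma> = {} then 1 else 0)"
    unfolding mu_def
  proof (rule sum.cong[OF refl])
    fix \<gamma> assume "\<gamma> \<in> {\<gamma>. is_clique R S \<gamma>}"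
    then have "finite \<gamma>" using assms by (auto simp: is_clique_def intro: finite_subset)
    then show "(- 1) ^ card \<gamma> * (0::'b) ^ card \<gamma> = (if \<gamma> = {} then 1 else 0)"
      by (auto simp: card_eq_0_iff power_0_left)
  qed
  also have "\<dots> = 1" using finite_cliques[OF assms, of R]
    by (simp add: sum.delta' is_clique_def)
  finally show ?thesis .
qed

lemma mu_empty [simp]: "mu R {} X = 1"
proof -
  have "{\<gamma>. is_clique R {} \<gamma>} = {{}}" by (auto simp: is_clique_def)
  then show ?thesis by (simp add: mu_def)
qed

lemma continuous_on_mu: "continuous_on UNIV (\<lambda>t::real. mu R S t)"
  unfolding mu_def by (intro continuous_intros)

lemma mu_of_real: "mu R S (complex_of_real t) = complex_of_real (mu R S t)"
  unfolding mu_def by simp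

lemma mu_pos_below_pS:
  fixes p t :: real
  assumes "finite S" "ereal p < pS R S" "0 \<le> t" "t \<le> p"
  shows "0 < mu R S t"
proof (rule ccontr)
  assume "\<not> 0 < mu R S t"
  moreover have "mu R S (0::real) = 1" using mu_at_0[OF assms(1)] .
  ultimately obtain s where s: "0 \<le> s" "s \<le> t" "mu R S s = 0"
    using IVT2[of "\<lambda>t. mu R S t" t 0] assms(3) continuous_on_mu[of R S]
    by (force simp: continuous_on_eq_continuous_at)
  then have "mu R S (complex_of_real s) = 0" by (simp add: mu_of_real)
  then have "pS R S \<le> ereal s"
    unfolding pS_def using s(1) by (metis (mono_tags) INF_lower mem_Collect_eq norm_of_real abs_of_nonneg)
  then show False using assms(2,4) s(2) by (metis ereal_less_eq(3) leD order.trans)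
qed

context dependence_alphabet
begin

lemma cliques_split:
  assumes "S \<subseteq> \<Sigma>" "a \<in> S"
  shows "{\<gamma>. is_clique R S \<gamma>}
    = {\<gamma>. is_clique R (S - {a}) \<gamma>} \<union> insert a ` {\<gamma>. is_clique R (S - Lset \<Sigma> R a) \<gamma>}"
proof (intro equalityI subsetI)
  fix \<gamma> assume \<gamma>: "\<gamma> \<in> {\<gamma>. is_clique R S \<gamma>}"
  show "\<gamma> \<in> {\<gamma>. is_clique R (S - {a}) \<gamma>} \<union> insert a ` {\<gamma>. is_clique R (S - Lset \<Sigma> R a) \<gamma>}"
  proof (cases "a \<in> \<gamma>")
    case True
    have "\<gamma> - {a} \<in> {\<gamma>. is_clique R (S - Lset \<Sigma> R a) \<gamma>}"
      using \<gamma> True assms(1) by (auto simp: is_clique_def Lset_def)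
    with True show ?thesis by (auto intro!: image_eqI[of _ _ "\<gamma> - {a}"])
  qed (use \<gamma> in \<open>auto simp: is_clique_def\<close>)
next
  fix \<gamma> assume "\<gamma> \<in> {\<gamma>. is_clique R (S - {a}) \<gamma>} \<union> insert a ` {\<gamma>. is_clique R (S - Lset \<Sigma> R a) \<gamma>}"
  then show "\<gamma> \<in> {\<gamma>. is_clique R S \<gamma>}"
  proof (elim UnE)
    assume "\<gamma> \<in> insert a ` {\<gamma>. is_clique R (S - Lset \<Sigma> R a) \<gamma>}"
    then obtain \<gamma>' where \<gamma>': "\<gamma> = insert a \<gamma>'" "is_clique R (S - Lset \<Sigma> R a) \<gamma>'" by auto
    have "b \<in> \<Sigma> \<and> \<not> R a b \<and> \<not> R b a" if "b \<in> \<gamma>'" for b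
    proof -
      have "b \<in> \<Sigma>" "\<not> R a b"
        using that \<gamma>'(2) assms(1) by (auto simp: is_clique_def Lset_def)
      moreover have "a \<in> \<Sigma>" using assms by auto
      ultimately show ?thesis using R_sym[of b a] by auto
    qed
    with \<gamma>' assms show ?thesis by (auto simp: is_clique_def)
  qed (auto simp: is_clique_def)
qed

lemma mu_split:
  fixes X :: "'b::comm_ring_1"
  assumes "S \<subseteq> \<Sigma>" "a \<in> S"
  shows "mu R S X = mu R (S - {a}) X - X * mu R (S - Lset \<Sigma> R a) X"
proof -
  let ?C0 = "{\<gamma>. is_clique R (S - {a}) \<gamma>}" and ?C1 = "{\<gamma>. is_clique R (S - Lset \<Sigma> R a) \<gamma>}"
  have "finite S" using assms(1) finite_alphabet finite_subset by blast
  have aL: "a \<in> Lset \<Sigma> R a" using assms R_refl by (auto simp: Lset_def)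
  have inj: "inj_on (insert a) ?C1"
    using aL by (intro inj_onI) (auto simp: is_clique_def dest: insert_ident)
  have card: "card (insert a \<gamma>) = Suc (card \<gamma>)" if "\<gamma> \<in> ?C1" for \<gamma>
    using that aL \<open>finite S\<close> by (auto simp: is_clique_def intro: finite_subset card_insert_disjoint)
  have "mu R S X = (\<Sum>\<gamma>\<in>?C0. (-1) ^ card \<gamma> * X ^ card \<gamma>)
      + (\<Sum>\<gamma>\<in>insert a ` ?C1. (-1) ^ card \<gamma> * X ^ card \<gamma>)"
    unfolding mu_def cliques_split[OF assms] using \<open>finite S\<close> aL
    by (intro sum.union_disjoint finite_cliques finite_imageI) (auto simp: is_clique_def)
  also have "(\<Sum>\<gamma>\<in>insert a ` ?C1. (-1) ^ card \<gamma> * X ^ card \<gamma>)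
      = (\<Sum>\<gamma>\<in>?C1. - X * ((-1) ^ card \<gamma> * X ^ card \<gamma>))"
    by (simp add: sum.reindex[OF inj] card mult.left_commute)
  finally show ?thesis by (simp add: mu_def sum_distrib_left sum_negf)
qed

end

section \<open>The law of the output\<close>

lemma has_sum_pmf: "set_pmf M \<subseteq> A \<Longrightarrow> (pmf M has_sum 1) A"
proof -
  assume A: "set_pmf M \<subseteq> A"
  have abs: "Infinite_Set_Sum.abs_summable_on (pmf M) A" by (rule pmf_abs_summable)
  then have "infsetsum (pmf M) A = infsum (pmf M) A" by (rule infsetsum_infsum)
  moreover have "infsetsum (pmf M) A = 1" using A by (rule infsetsum_pmf_eq_1)
  moreover have "pmf M summable_on A"
    using abs abs_summable_equivalent abs_summable_summable by blast
  ultimately show ?thesis by (simp add: has_sum_iff)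
qed

lemma set_pmf_subset_if_pmf_eq: "(\<And>x. pmf M x = (if x \<in> A then f x else 0)) \<Longrightarrow> set_pmf M \<subseteq> A"
  by (auto simp: set_pmf_eq)

lemma pmf_map_pair_pmf_inj:
  assumes inj: "inj_on G (A \<times> B)" and M: "set_pmf M \<subseteq> A" and N: "set_pmf N \<subseteq> B"
    and x: "x \<in> A" and y: "y \<in> B"
  shows "pmf (map_pmf G (pair_pmf M N)) (G (x, y)) = pmf M x * pmf N y"
proof (cases "(x, y) \<in> set_pmf (pair_pmf M N)")
  case True
  have "inj_on G (set_pmf (pair_pmf M N))" by (rule inj_on_subset[OF inj]) (use M N in auto)
  then show ?thesis using True by (simp add: pmf_map_inj pmf_pair)
next
  case False
  then have "pmf M x * pmf N y = 0" by (simp add: set_pmf_iff pmf_pair)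
  moreover have "G (x, y) \<notin> G ` set_pmf (pair_pmf M N)"
  proof
    assume "G (x, y) \<in> G ` set_pmf (pair_pmf M N)"
    then obtain z where z: "z \<in> set_pmf (pair_pmf M N)" "G (x, y) = G z" by auto
    have "z \<in> A \<times> B" using z(1) M N by auto
    then have "z = (x, y)" using inj z(2) x y by (auto simp: inj_on_def)
    then show False using z(1) False by simp
  qed
  ultimately show ?thesis by (simp add: pmf_map_outside)
qed

lemma pmf_map_pair_pmf_outside:
  assumes "set_pmf M \<subseteq> A" "set_pmf N \<subseteq> B" "z \<notin> G ` (A \<times> B)"
  shows "pmf (map_pmf G (pair_pmf M N)) z = 0"
  using assms by (intro pmf_map_outside) auto

lemma pmf_bind_concentrated:
  assumes "\<And>K. K \<noteq> k \<Longrightarrow> pmf (F K) x = 0"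
  shows "pmf (bind_pmf M F) x = pmf M k * pmf (F k) x"
proof -
  have "pmf (bind_pmf M F) x = (\<integral>K. pmf (F K) x \<partial>measure_pmf M)" by (rule pmf_bind)
  also have "\<dots> = (\<Sum>K\<in>{k}. pmf (F K) x * pmf M K)"
    using assms by (intro integral_measure_pmf_real) auto
  finally show ?thesis by simp
qed

lemma map_fst_bind_pmf_pair:
  "map_pmf fst (bind_pmf M (\<lambda>(\<xi>, c). bind_pmf N (\<lambda>(v, c'). return_pmf (f \<xi> v, h \<xi> c v c')))) =
   map_pmf (\<lambda>(\<xi>, v). f \<xi> v) (pair_pmf (map_pmf fst M) (map_pmf fst N))"
  by (simp add: pair_pmf_def map_bind_pmf bind_map_pmf map_return_pmf case_prod_beta)

text \<open>Here K counts the letters a of the output.\<close>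

lemma pmf_geometric_max_factorisation:
  assumes "a \<in> T" "0 < q" "q < 1"
    and L: "\<And>k \<xi>. pmf (L k) \<xi> = (if \<xi> \<in> pyramids R S a k then p ^ tlen \<xi> / (1 - q) ^ k else 0)"
    and V: "\<And>v. pmf V v = (if v \<in> traces_max_in R (S - {a}) T then c * p ^ tlen v else 0)"
  shows "pmf (bind_pmf (geometric_pmf q) (\<lambda>K. map_pmf (\<lambda>(\<xi>, v). tmult R \<xi> v) (pair_pmf (L K) V))) x
    = (if x \<in> traces_max_in R S T then q * c * p ^ tlen x else 0)"
proof -
  let ?G = "\<lambda>(\<xi>, v). tmult R \<xi> v" and ?V = "traces_max_in R (S - {a}) T"
  have L_set: "set_pmf (L k) \<subseteq> pyramids R S a k" for k by (rule set_pmf_subset_if_pmf_eq[OF L])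
  have V_set: "set_pmf V \<subseteq> ?V" by (rule set_pmf_subset_if_pmf_eq[OF V])
  have bij: "bij_betw ?G ((\<Union>k. pyramids R S a k) \<times> ?V) (traces_max_in R S T)"
    by (rule bij_betw_max_factorisation[OF assms(1)])
  show ?thesis
  proof (cases "x \<in> traces_max_in R S T")
    case True
    then obtain k \<xi> v where fac: "\<xi> \<in> pyramids R S a k" "v \<in> ?V" "x = tmult R \<xi> v"
      by (rule traces_max_in_factorisation)
    have other: "pmf (map_pmf ?G (pair_pmf (L K) V)) x = 0" if "K \<noteq> k" for K
      using pmf_map_pair_pmf_outside[OF L_set V_set tmult_notin_other_pyramids[OF fac(1,2) that]]
      by (simp add: fac(3))
    have inj: "inj_on ?G (pyramids R S a k \<times> ?V)"
      using bij_betw_imp_inj_on[OF bij] by (rule inj_on_subset) auto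
    have "tlen x = tlen \<xi> + tlen v"
      using tlen_tmult[OF subsetD[OF pyramids_subset_range fac(1)] subsetD[OF traces_max_in_subset_range fac(2)]]
        fac(3) by simp
    moreover have "pmf (map_pmf ?G (pair_pmf (L k) V)) x = p ^ tlen \<xi> / (1 - q) ^ k * (c * p ^ tlen v)"
      using pmf_map_pair_pmf_inj[OF inj L_set V_set fac(1,2)] fac L V by simp
    ultimately show ?thesis
      using True assms(2,3) by (simp add: pmf_bind_concentrated[OF other] pmf_geometric power_add)
  next
    case False
    have "x \<notin> ?G ` (pyramids R S a K \<times> ?V)" for K
      using False bij_betw_imp_surj_on[OF bij] by blast
    then show ?thesis
      using False by (simp add: pmf_bind pmf_map_pair_pmf_outside[OF L_set V_set])
  qed
qed

lemma map_fst_loopA_Suc: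
  "map_pmf fst (loopA R ccall casg cmul D a (Suc k)) =
    map_pmf (\<lambda>(\<xi>, v). tmult R (tmult R \<xi> v) (tr R [a]))
      (pair_pmf (map_pmf fst (loopA R ccall casg cmul D a k)) (map_pmf fst D))"
  by (simp add: map_fst_bind_pmf_pair)

lemma map_fst_A1n_Suc:
  fixes ch :: "'a set \<Rightarrow> 'a set \<Rightarrow> 'a" and S T :: "'a set"
  assumes "S \<inter> T \<noteq> {}"
  defines "a \<equiv> ch S T"
  shows "map_pmf fst (A1n (Suc n) \<Sigma> R ch p cch ccall casg cmul g S T) =
    bind_pmf (geometric_pmf (mu R S p / mu R (S - {a}) p)) (\<lambda>K.
      map_pmf (\<lambda>(\<xi>, v). tmult R \<xi> v)
        (pair_pmf (map_pmf fst (loopA R ccall casg cmul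
                     (A1n n \<Sigma> R ch p cch ccall casg cmul g (S - {a}) (Lset \<Sigma> R a)) a K))
                  (map_pmf fst (A1n n \<Sigma> R ch p cch ccall casg cmul g (S - {a}) T))))"
  unfolding a_def A1n.simps(2) if_not_P[OF assms(1)] Let_def
  by (subst map_bind_pmf) (simp only: map_fst_bind_pmf_pair diff_diff_eq2 add_diff_cancel_left')

context dependence_alphabet
begin

lemma pmf_loopA:
  assumes "S \<subseteq> \<Sigma>" "a \<in> S" "0 < p" "0 < Z"
    and D: "\<And>v. pmf (map_pmf fst D) v
      = (if v \<in> traces_max_in R (S - {a}) (Lset \<Sigma> R a) then p ^ tlen v / Z else 0)"
  shows "pmf (map_pmf fst (loopA R ccall casg cmul D a k)) \<xi>
    = (if \<xi> \<in> pyramids R S a k then p ^ tlen \<xi> / (p * Z) ^ k else 0)"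
proof (induction k arbitrary: \<xi>)
  case 0
  show ?case by (auto simp: pyramids_0 tunit_def pmf_return tlen_tr)
next
  case (Suc k)
  let ?V = "traces_max_in R (S - {a}) (Lset \<Sigma> R a)"
    and ?G = "\<lambda>(\<xi>, v). tmult R (tmult R \<xi> v) (tr R [a])"
  have L_set: "set_pmf (map_pmf fst (loopA R ccall casg cmul D a k)) \<subseteq> pyramids R S a k"
    by (rule set_pmf_subset_if_pmf_eq[OF Suc.IH])
  have D_set: "set_pmf (map_pmf fst D) \<subseteq> ?V" by (rule set_pmf_subset_if_pmf_eq[OF D])
  have bij: "bij_betw ?G (pyramids R S a k \<times> ?V) (pyramids R S a (Suc k))"
    by (rule bij_betw_pyramids_Suc[OF assms(1,2)])
  show ?case
  proof (cases "\<xi> \<in> pyramids R S a (Suc k)")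
    case True
    then obtain \<xi>0 v0 where fac: "\<xi>0 \<in> pyramids R S a k" "v0 \<in> ?V"
      "\<xi> = tmult R (tmult R \<xi>0 v0) (tr R [a])"
      by (rule pyramids_Suc_factorisation[OF assms(1,2)])
    have "tlen \<xi> = tlen \<xi>0 + tlen v0 + 1"
      using fac(3) subsetD[OF pyramids_subset_range fac(1)] subsetD[OF traces_max_in_subset_range fac(2)]
      by (auto simp: tmult_tr tlen_tr)
    moreover have "pmf (map_pmf fst (loopA R ccall casg cmul D a (Suc k))) \<xi>
        = p ^ tlen \<xi>0 / (p * Z) ^ k * (p ^ tlen v0 / Z)"
      unfolding map_fst_loopA_Suc fac(3)
      using pmf_map_pair_pmf_inj[OF bij_betw_imp_inj_on[OF bij] L_set D_set fac(1,2)] fac(1,2) Suc.IH D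
      by simp
    ultimately show ?thesis using True assms(3,4) by (simp add: power_add field_simps)
  next
    case False
    then have "\<xi> \<notin> ?G ` (pyramids R S a k \<times> ?V)" using bij_betw_imp_surj_on[OF bij] by simp
    then show ?thesis
      unfolding map_fst_loopA_Suc using False by (simp add: pmf_map_pair_pmf_outside[OF L_set D_set])
  qed
qed

lemma pmf_A1n_Suc:
  assumes "S \<subseteq> \<Sigma>" "\<forall>S'\<subseteq>S. 0 < mu R S' p" "0 < p" "ch S T \<in> S \<inter> T"
    and IH: "\<And>T' v. pmf (map_pmf fst (A1n n \<Sigma> R ch p cch ccall casg cmul g (S - {ch S T}) T')) v
      = (if v \<in> traces_max_in R (S - {ch S T}) T'
         then p ^ tlen v * mu R (S - {ch S T}) p / mu R (S - {ch S T} - T') p else 0)"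
  shows "pmf (map_pmf fst (A1n (Suc n) \<Sigma> R ch p cch ccall casg cmul g S T)) x
    = (if x \<in> traces_max_in R S T then p ^ tlen x * mu R S p / mu R (S - T) p else 0)"
proof -
  define a where "a = ch S T"
  have a: "a \<in> S" "a \<in> T" using assms(4) by (auto simp: a_def)
  have "a \<in> Lset \<Sigma> R a" using a(1) assms(1) R_refl by (auto simp: Lset_def)
  then have diff_L: "S - {a} - Lset \<Sigma> R a = S - Lset \<Sigma> R a" by blast
  have diff_T: "S - {a} - T = S - T" using a(2) by blast
  define q where "q = mu R S p / mu R (S - {a}) p"
  define Z where "Z = mu R (S - Lset \<Sigma> R a) p / mu R (S - {a}) p"
  have mu_pos: "0 < mu R S p" "0 < mu R (S - {a}) p" "0 < mu R (S - Lset \<Sigma> R a) p"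
    "0 < mu R (S - T) p"
    using assms(2) by auto
  have "1 - q = p * Z"
    using mu_split[OF assms(1) a(1), of p] mu_pos(2) by (simp add: q_def Z_def field_simps)
  moreover have "0 < Z" using mu_pos by (simp add: Z_def)
  ultimately have "q < 1" using assms(3) by (smt (verit) mult_pos_pos)
  then have q: "0 < q" "q < 1" using mu_pos(1,2) by (simp_all add: q_def)
  have D1: "pmf (map_pmf fst (A1n n \<Sigma> R ch p cch ccall casg cmul g (S - {a}) (Lset \<Sigma> R a))) v
      = (if v \<in> traces_max_in R (S - {a}) (Lset \<Sigma> R a) then p ^ tlen v / Z else 0)" for v
    using IH[folded a_def] by (simp add: diff_L Z_def)
  have L: "pmf (map_pmf fst (loopA R ccall casg cmul
      (A1n n \<Sigma> R ch p cch ccall casg cmul g (S - {a}) (Lset \<Sigma> R a)) a k)) \<xi>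
      = (if \<xi> \<in> pyramids R S a k then p ^ tlen \<xi> / (1 - q) ^ k else 0)" for k \<xi>
    using pmf_loopA[OF assms(1) a(1) assms(3) \<open>0 < Z\<close> D1] \<open>1 - q = p * Z\<close> by simp
  have V: "pmf (map_pmf fst (A1n n \<Sigma> R ch p cch ccall casg cmul g (S - {a}) T)) v
      = (if v \<in> traces_max_in R (S - {a}) T
         then mu R (S - {a}) p / mu R (S - T) p * p ^ tlen v else 0)" for v
    using IH[folded a_def] by (simp add: diff_T)
  have "S \<inter> T \<noteq> {}" using a by blast
  then show ?thesis
    unfolding map_fst_A1n_Suc[OF \<open>S \<inter> T \<noteq> {}\<close>] a_def[symmetric] q_def[symmetric]
    using pmf_geometric_max_factorisation[OF a(2) q L V] mu_pos
    by (simp add: q_def)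
qed

lemma pmf_A1n:
  assumes "card S = n" "S \<subseteq> \<Sigma>" "\<forall>S'\<subseteq>S. 0 < mu R S' p" "0 < p"
    and ch: "\<forall>X Y. X \<inter> Y \<noteq> {} \<longrightarrow> ch X Y \<in> X \<inter> Y"
  shows "pmf (map_pmf fst (A1n n \<Sigma> R ch p cch ccall casg cmul g S T)) x
    = (if x \<in> traces_max_in R S T then p ^ tlen x * mu R S p / mu R (S - T) p else 0)"
  using assms(1-3)
proof (induction n arbitrary: S T x)
  case 0
  then have "S = {}" using finite_alphabet finite_subset card_0_eq by blast
  then show ?case by (simp add: traces_max_in_disjoint tunit_def pmf_return tlen_tr)
next
  case (Suc n)
  show ?case
  proof (cases "S \<inter> T = {}")
    case True
    moreover have "S - T = S" "0 < mu R S p" using True Suc.prems(3) by auto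
    ultimately show ?thesis
      by (simp add: traces_max_in_disjoint tunit_def pmf_return tlen_tr)
  next
    case False
    then have a: "ch S T \<in> S \<inter> T" using ch by blast
    have "finite S" using Suc.prems(2) finite_alphabet finite_subset by blast
    then have "card (S - {ch S T}) = n" using Suc.prems(1) a by simp
    moreover have "S - {ch S T} \<subseteq> \<Sigma>" "\<forall>S'\<subseteq>S - {ch S T}. 0 < mu R S' p"
      using Suc.prems(2,3) by auto
    ultimately have "pmf (map_pmf fst (A1n n \<Sigma> R ch p cch ccall casg cmul g (S - {ch S T}) T')) v
      = (if v \<in> traces_max_in R (S - {ch S T}) T'
         then p ^ tlen v * mu R (S - {ch S T}) p / mu R (S - {ch S T} - T') p else 0)" for T' v
      by (rule Suc.IH)
    then show ?thesis by (rule pmf_A1n_Suc[where ch=ch and S=S and T=T, OF Suc.prems(2,3) assms(4) a])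
  qed
qed

section \<open>Partition function and positivity\<close>

lemma has_sum_traces_max_in:
  fixes p :: real
  assumes "S \<subseteq> \<Sigma>" "\<forall>S'\<subseteq>S. 0 < mu R S' p" "0 < p"
  shows "((\<lambda>x. p ^ tlen x) has_sum (mu R (S - T) p / mu R S p)) (traces_max_in R S T)"
proof -
  define ch :: "'a set \<Rightarrow> 'a set \<Rightarrow> 'a" where "ch X Y = (SOME a. a \<in> X \<inter> Y)" for X Y
  have ch: "\<forall>X Y. X \<inter> Y \<noteq> {} \<longrightarrow> ch X Y \<in> X \<inter> Y"
    unfolding ch_def by (metis some_in_eq)
  let ?M = "map_pmf fst (A1n (card S) \<Sigma> R ch p 0 0 0 0 (\<lambda>_. 0) S T)"
  have M: "pmf ?M x = (if x \<in> traces_max_in R S T then p ^ tlen x * mu R S p / mu R (S - T) p else 0)"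
    for x using pmf_A1n[OF refl assms ch] .
  have mu_pos: "0 < mu R S p" "0 < mu R (S - T) p" using assms(2) by auto
  have "(pmf ?M has_sum 1) (traces_max_in R S T)"
    by (rule has_sum_pmf[OF set_pmf_subset_if_pmf_eq[OF M]])
  then have "((\<lambda>x. mu R S p / mu R (S - T) p * p ^ tlen x) has_sum 1) (traces_max_in R S T)"
    by (rule has_sum_cong[THEN iffD1, rotated]) (simp add: M)
  then show ?thesis
    using mu_pos by (subst (asm) has_sum_cmult_right_iff) (auto simp: field_simps)
qed

lemma Dpt_eq:
  fixes p :: real
  assumes "S \<subseteq> \<Sigma>" "\<forall>S'\<subseteq>S. 0 < mu R S' p" "0 < p"
  shows "Dpt R S T p x
    = (if x \<in> traces_max_in R S T then p ^ tlen x * mu R S p / mu R (S - T) p else 0)"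
proof -
  have mu_pos: "0 < mu R S p" "0 < mu R (S - T) p" using assms(2) by auto
  have "(Bw R S p has_sum (mu R S p * (mu R (S - T) p / mu R S p))) (traces_max_in R S T)"
    unfolding Bw_def by (rule has_sum_cmult_right[OF has_sum_traces_max_in[OF assms]])
  then have "(\<Sum>\<^sub>\<infinity>y\<in>traces_max_in R S T. Bw R S p y) = mu R (S - T) p"
    using mu_pos by (simp add: infsumI)
  moreover have "{y \<in> traces R S. tmax R y \<subseteq> T} = traces_max_in R S T"
    and "x \<in> traces R S \<and> tmax R x \<subseteq> T \<longleftrightarrow> x \<in> traces_max_in R S T"
    by (simp_all add: traces_max_in_def)
  ultimately show ?thesis by (simp only: Dpt_def) (simp add: Bw_def mult.commute)
qed

lemma mu_le_mu_subset:
  fixes s :: real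
  assumes "S \<subseteq> \<Sigma>" "S' \<subseteq> S" "0 < s" "\<forall>S''\<subseteq>S. 0 < mu R S'' s"
  shows "mu R S s \<le> mu R S' s"
proof -
  have "S' \<subseteq> \<Sigma>" "\<forall>S''\<subseteq>S'. 0 < mu R S'' s" using assms by auto
  from has_sum_traces_max_in[OF this assms(3), of S']
  have sum': "((\<lambda>x. s ^ tlen x) has_sum (1 / mu R S' s)) (traces R S')"
    by (simp add: traces_max_in_self)
  from has_sum_traces_max_in[OF assms(1,4,3), of S]
  have sum: "((\<lambda>x. s ^ tlen x) has_sum (1 / mu R S s)) (traces R S)"
    by (simp add: traces_max_in_self)
  have "1 / mu R S' s \<le> 1 / mu R S s"
    by (rule has_sum_mono_neutral[OF sum' sum]) (use assms(3) traces_mono[OF assms(2)] in auto)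
  moreover have "0 < mu R S' s" "0 < mu R S s" using assms(2,4) by auto
  ultimately show ?thesis
    using inverse_le_iff_le[of "mu R S' s" "mu R S s"] by (simp add: inverse_eq_divide)
qed

text \<open>If some \<open>mu R S'\<close> with \<open>S' \<subseteq> S\<close> vanished in \<open>[0, p]\<close>, then at the first such point
  \<open>t\<^sub>0\<close> the comparison of generating functions below \<open>t\<^sub>0\<close> would force \<open>mu R S t\<^sub>0 \<le> 0\<close>.\<close>

lemma mu_pos_subsets:
  fixes p :: real
  assumes "S \<subseteq> \<Sigma>" "0 < p" and pos: "\<And>t. 0 \<le> t \<Longrightarrow> t \<le> p \<Longrightarrow> 0 < mu R S t"
  shows "\<forall>S'\<subseteq>S. 0 < mu R S' p"
proof (rule ccontr)
  assume "\<not> (\<forall>S'\<subseteq>S. 0 < mu R S' p)"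
  have "finite S" using assms(1) finite_alphabet finite_subset by blast
  define Z where "Z = {t \<in> {0..p}. \<exists>S'\<in>Pow S. mu R S' t \<le> 0}"
  have "closed Z"
  proof -
    have "Z = {0..p} \<inter> (\<Union>S'\<in>Pow S. {t. mu R S' t \<le> 0})" by (auto simp: Z_def)
    then show ?thesis using \<open>finite S\<close>
      by (simp add: closed_Int closed_UN closed_Collect_le[OF continuous_on_mu continuous_on_const])
  qed
  moreover have "p \<in> Z" using \<open>\<not> (\<forall>S'\<subseteq>S. 0 < mu R S' p)\<close> assms(2) by (auto simp: Z_def not_less)
  moreover have bdd: "bdd_below Z" by (auto simp: Z_def bdd_below_def)
  ultimately have "Inf Z \<in> Z" by (intro closed_contains_Inf) auto
  then obtain S0 where S0: "S0 \<subseteq> S" "mu R S0 (Inf Z) \<le> 0" and t0: "0 \<le> Inf Z" "Inf Z \<le> p"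
    by (auto simp: Z_def)
  have "finite S0" using S0(1) \<open>finite S\<close> finite_subset by blast
  then have "mu R S0 (0::real) = 1" by (rule mu_at_0)
  with S0(2) t0 have "0 < Inf Z" by (cases "Inf Z = 0") auto
  have "mu R S s \<le> mu R S0 s" if s: "s \<in> {0<..<Inf Z}" for s
  proof (rule mu_le_mu_subset[OF assms(1) S0(1)])
    have "s \<notin> Z" using s cInf_lower[OF _ bdd, of s] by auto
    then show "\<forall>S''\<subseteq>S. 0 < mu R S'' s" using s t0 by (auto simp: Z_def not_le)
  qed (use s in simp)
  then have "closure {0<..<Inf Z} \<subseteq> {s. mu R S s \<le> mu R S0 s}"
    by (intro closure_minimal closed_Collect_le continuous_on_mu) auto
  moreover have "Inf Z \<in> closure {0<..<Inf Z}" using \<open>0 < Inf Z\<close> by simp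
  ultimately have "mu R S (Inf Z) \<le> mu R S0 (Inf Z)" by blast
  then show False using S0(2) pos t0 by fastforce
qed

lemma mu_pos_subsets_below_pS:
  fixes p :: real
  assumes "S \<subseteq> \<Sigma>" "0 < p" "ereal p < pS R S"
  shows "\<forall>S'\<subseteq>S. 0 < mu R S' p"
  using assms finite_alphabet finite_subset
  by (intro mu_pos_subsets mu_pos_below_pS) blast+

end

section \<open>Running time\<close>

lemma loopA_cost:
  assumes D: "\<And>v c'. (v, c') \<in> set_pmf D \<Longrightarrow> v \<in> range (tr R) \<and> c' \<le> \<beta> * (tlen v + 1)"
  shows "(\<xi>, c) \<in> set_pmf (loopA R ccall casg cmul D a K) \<Longrightarrow>
    \<xi> \<in> range (tr R) \<and> K \<le> tlen \<xi> \<and> c \<le> K * (ccall + 2 * cmul + 2 * casg) + \<beta> * tlen \<xi>"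
proof (induction K arbitrary: \<xi> c)
  case 0
  then show ?case by (auto simp: tunit_def tlen_tr)
next
  case (Suc K)
  then obtain \<xi>0 c0 v c' where
    step: "(\<xi>0, c0) \<in> set_pmf (loopA R ccall casg cmul D a K)" "(v, c') \<in> set_pmf D"
    "\<xi> = tmult R (tmult R \<xi>0 v) (tr R [a])" "c = c0 + ccall + c' + 2 * cmul + casg + casg"
    by auto
  have IH: "\<xi>0 \<in> range (tr R)" "K \<le> tlen \<xi>0" "c0 \<le> K * (ccall + 2 * cmul + 2 * casg) + \<beta> * tlen \<xi>0"
    using Suc.IH[OF step(1)] by auto
  have v: "v \<in> range (tr R)" "c' \<le> \<beta> * (tlen v + 1)" using D[OF step(2)] by auto
  have "\<xi> \<in> range (tr R)" and len: "tlen \<xi> = tlen \<xi>0 + tlen v + 1"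
    using step(3) IH(1) v(1) by (auto simp: tmult_tr tlen_tr)
  moreover have "c \<le> Suc K * (ccall + 2 * cmul + 2 * casg) + \<beta> * tlen \<xi>"
    using step(4) IH(3) v(2) len by (simp add: algebra_simps)
  ultimately show ?case using IH(2) by simp
qed

lemma set_pmf_A1n_SucE:
  assumes "(\<xi>, c) \<in> set_pmf (A1n (Suc m) \<Sigma> R ch p cch ccall casg cmul g S T)" "S \<inter> T \<noteq> {}"
  obtains K \<xi>1 c1 v c' where
    "(\<xi>1, c1) \<in> set_pmf (loopA R ccall casg cmul
       (A1n m \<Sigma> R ch p cch ccall casg cmul g (S - {ch S T}) (Lset \<Sigma> R (ch S T))) (ch S T) K)"
    "(v, c') \<in> set_pmf (A1n m \<Sigma> R ch p cch ccall casg cmul g (S - {ch S T}) T)"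
    "\<xi> = tmult R \<xi>1 v" "c = cch + cch + casg + g K + casg + c1 + ccall + c' + cmul + casg"
proof -
  let ?a = "ch S T"
  have "(\<xi>, c) \<in> set_pmf (bind_pmf (geometric_pmf (mu R S p / mu R (S - {?a}) p)) (\<lambda>K.
      bind_pmf (loopA R ccall casg cmul
        (A1n m \<Sigma> R ch p cch ccall casg cmul g (S - {?a}) (Lset \<Sigma> R ?a)) ?a K) (\<lambda>(\<xi>, c).
      bind_pmf (A1n m \<Sigma> R ch p cch ccall casg cmul g (S - {?a}) T) (\<lambda>(v, c').
      return_pmf (tmult R \<xi> v, cch + cch + casg + g K + casg + c + ccall + c' + cmul + casg)))))"
    using assms by (simp add: Let_def)
  then show thesis using that by auto
qed

lemma A1n_cost:
  fixes crnd cch ccall casg cmul :: nat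
  assumes g: "\<forall>k. g k \<le> crnd * (k + 1)"
  defines "\<alpha> \<equiv> 3 * cch + 5 * casg + 3 * ccall + 3 * cmul + crnd"
  shows "(\<xi>, c) \<in> set_pmf (A1n m \<Sigma> R ch p cch ccall casg cmul g S T) \<Longrightarrow>
    \<xi> \<in> range (tr R) \<and> c \<le> \<alpha> * (m + 1) * (tlen \<xi> + 1)"
proof (induction m arbitrary: S T \<xi> c)
  case 0
  then show ?case by (auto simp: tunit_def tlen_tr \<alpha>_def)
next
  case (Suc m)
  show ?case
  proof (cases "S \<inter> T = {}")
    case True
    then show ?thesis using Suc.prems by (auto simp: tunit_def tlen_tr \<alpha>_def)
  next
    case False
    define a where "a = ch S T"
    define D1 where "D1 = A1n m \<Sigma> R ch p cch ccall casg cmul g (S - {a}) (Lset \<Sigma> R a)"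
    define D2 where "D2 = A1n m \<Sigma> R ch p cch ccall casg cmul g (S - {a}) T"
    obtain K \<xi>1 c1 v c' where
      run: "(\<xi>1, c1) \<in> set_pmf (loopA R ccall casg cmul D1 a K)" "(v, c') \<in> set_pmf D2"
      "\<xi> = tmult R \<xi>1 v" "c = cch + cch + casg + g K + casg + c1 + ccall + c' + cmul + casg"
      using Suc.prems False unfolding a_def D1_def D2_def by (rule set_pmf_A1n_SucE)
    let ?\<beta> = "\<alpha> * (m + 1)"
    have loop: "\<xi>1 \<in> range (tr R)" "K \<le> tlen \<xi>1"
      "c1 \<le> K * (ccall + 2 * cmul + 2 * casg) + ?\<beta> * tlen \<xi>1"
      using loopA_cost[of D1 R ?\<beta>, OF _ run(1)] Suc.IH unfolding D1_def by auto
    have v: "v \<in> range (tr R)" "c' \<le> ?\<beta> * (tlen v + 1)"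
      using Suc.IH run(2) unfolding D2_def by auto
    have "\<xi> \<in> range (tr R)" and len: "tlen \<xi> = tlen \<xi>1 + tlen v"
      using run(3) loop(1) v(1) by (auto simp: tmult_tr tlen_tr)
    have "c \<le> \<alpha> + K * \<alpha> + ?\<beta> * (tlen \<xi> + 1)"
      using run(4) g[rule_format, of K] loop(3) v(2) len by (simp add: \<alpha>_def algebra_simps)
    also have "\<dots> \<le> \<alpha> * (tlen \<xi> + 1) + ?\<beta> * (tlen \<xi> + 1)"
      using mult_le_mono2[of "K + 1" "tlen \<xi> + 1" \<alpha>] loop(2) len by (simp add: algebra_simps)
    also have "\<dots> = \<alpha> * (Suc m + 1) * (tlen \<xi> + 1)"
      by (simp add: algebra_simps)
    finally show ?thesis using \<open>\<xi> \<in> range (tr R)\<close> by simp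
  qed
qed

context dependence_alphabet
begin

lemma pmf_A1:
  fixes p :: real
  assumes "S \<subseteq> \<Sigma>" "0 < p" "ereal p < pS R S" "\<forall>X Y. X \<inter> Y \<noteq> {} \<longrightarrow> ch X Y \<in> X \<inter> Y"
  shows "pmf (map_pmf fst (A1 \<Sigma> R ch p cch ccall casg cmul g S T)) x = Dpt R S T p x"
proof -
  have pos: "\<forall>S'\<subseteq>S. 0 < mu R S' p" by (rule mu_pos_subsets_below_pS[OF assms(1-3)])
  show ?thesis
    unfolding A1_def pmf_A1n[OF refl assms(1) pos assms(2,4)] Dpt_eq[OF assms(1) pos assms(2)] ..
qed

lemma A1_cost:
  fixes crnd :: nat
  assumes "S \<subseteq> \<Sigma>" "\<forall>k. g k \<le> crnd * (k + 1)"
    and "(\<xi>, n) \<in> set_pmf (A1 \<Sigma> R ch p cch ccall casg cmul g S T)"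
  shows "n \<le> (3 * cch + 5 * casg + 3 * ccall + 3 * cmul + crnd) * (card \<Sigma> + 1) * (tlen \<xi> + 1)"
proof -
  have "n \<le> (3 * cch + 5 * casg + 3 * ccall + 3 * cmul + crnd) * (card S + 1) * (tlen \<xi> + 1)"
    using A1n_cost[OF assms(2)] assms(3) unfolding A1_def by blast
  also have "\<dots> \<le> (3 * cch + 5 * casg + 3 * ccall + 3 * cmul + crnd) * (card \<Sigma> + 1) * (tlen \<xi> + 1)"
    using card_mono[OF finite_alphabet assms(1)] by (intro mult_le_mono1 mult_le_mono2) simp
  finally show ?thesis .
qed

end

theorem theorem2p1:
  fixes cch ccall casg cmul crnd :: nat
  shows "\<exists>C::nat. \<forall>(\<Sigma>::'a set) R ch g S T (p::real).
     finite \<Sigma> \<and> (\<forall>a\<in>\<Sigma>. R a a) \<and> (\<forall>a\<in>\<Sigma>. \<forall>b\<in>\<Sigma>. R a b \<longrightarrow> R b a) \<and>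
     S \<subseteq> \<Sigma> \<and> T \<subseteq> \<Sigma> \<and> 0 < p \<and> ereal p < pS R S \<and>
     (\<forall>X Y. X \<inter> Y \<noteq> {} \<longrightarrow> ch X Y \<in> X \<inter> Y) \<and>
     (\<forall>k. g k \<le> crnd * (k + 1))
     \<longrightarrow>
     (\<forall>x. pmf (map_pmf fst (A1 \<Sigma> R ch p cch ccall casg cmul g S T)) x = Dpt R S T p x) \<and>
     (\<forall>\<xi> n. (\<xi>, n) \<in> set_pmf (A1 \<Sigma> R ch p cch ccall casg cmul g S T)
        \<longrightarrow> n \<le> C * (card \<Sigma> + 1) * (tlen \<xi> + 1))"
  by (intro exI[of _ "3 * cch + 5 * casg + 3 * ccall + 3 * cmul + crnd"] allI impI conjI; elim conjE;
      rule dependence_alphabet.pmf_A1 dependence_alphabet.A1_cost;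
      assumption?; simp add: dependence_alphabet_def)

end
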